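(* Let $I$ be a finite set of products, each $i\in I$ having a real (positive or negative) unit profit $up(i)$, and let $D=\{T_1,\dots,T_n\}$ be a database of transactions, where each transaction $T_c$ is a subset of $I$ with a positive purchase quantity $q(i,T_c)$ for each $i\in T_c$, and is assigned a time period $pe(T_c)$. Let $\prec$ be the total order on $I$ described in the context, and consider the set-enumeration tree over $I$ with respect to $\prec$, in which the children of a node $X\subseteq I$ are the sets $Y=X\cup\{z\}$ with $z\in I\setminus X$ and $x\prec z$ for all $x\in X$. Then for every node $X$, every child $Y$ of $X$, and every time period $h$, $$p(Y,h)\le pp(X,h)+rpp(X,h),$$ and over the whole database $$p(Y)\le pp(X)+rpp(X).$$
   Context: The profit of $i$ in $T_c$ is $p(i,T_c)=up(i)\cdot q(i,T_c)$; for $X\subseteq T_c$, $p(X,T_c)=\sum_{i\in X}p(i,T_c)$. The profit of $X$ in period $h$ is $p(X,h)=\sum_{T_c\in D,\ X\subseteq T_c,\ pe(T_c)=h}p(X,T_c)$, and $p(X)=\sum_{T_c\in D,\ X\subseteq T_c}p(X,T_c)$. The redefined transaction profit is $rtp(T_c)=\sum_{i\in T_c,\ p(i,T_c)>0}p(i,T_c)$ and $RTWU(X)=\sum_{T_c\in D,\ X\subseteq T_c}rtp(T_c)$. The total order $\prec$ sorts products by ascending $RTWU(\{i\})$, with every product of negative unit profit placed after all products of positive unit profit. For $X\subseteq T_c$: the positive profit $pp(X,T_c)$ is the sum of the nonnegative values $p(i,T_c)$, $i\in X$; the negative profit $np(X,T_c)$ is the sum of the negative values $p(i,T_c)$, $i\in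 X$ (so $p(X,T_c)=pp(X,T_c)+np(X,T_c)$); the remaining positive profit is $rpp(X,T_c)=\sum\{p(i,T_c): i\in T_c\setminus X,\ x\prec i \text{ for all } x\in X,\ p(i,T_c)\ge 0\}$. Then $pp(X,h)$, $rpp(X,h)$ are the sums of $pp(X,T_c)$, $rpp(X,T_c)$ over transactions $T_c\supseteq X$ with $pe(T_c)=h$, and $pp(X)$, $rpp(X)$ are the corresponding sums over all transactions $T_c\supseteq X$ in $D$. *)

theory Defs
  imports Complex_Main
begin

text \<open>Database: transactions are indexed by c < n; T c is the item set of
transaction c, q i c its purchase quantity of item i, pe c its period.\<close>

definition pi_T :: "('a \<Rightarrow> real) \<Rightarrow> ('a \<Rightarrow> nat \<Rightarrow> real) \<Rightarrow> 'a \<Rightarrow> nat \<Rightarrow> real" where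
  "pi_T up q i c = up i * q i c"

definition pX :: "('a \<Rightarrow> real) \<Rightarrow> ('a \<Rightarrow> nat \<Rightarrow> real) \<Rightarrow> 'a set \<Rightarrow> nat \<Rightarrow> real" where
  "pX up q X c = (\<Sum>i\<in>X. pi_T up q i c)"

definition p_period :: "('a \<Rightarrow> real) \<Rightarrow> ('a \<Rightarrow> nat \<Rightarrow> real) \<Rightarrow> (nat \<Rightarrow> 'a set)
    \<Rightarrow> (nat \<Rightarrow> 'p) \<Rightarrow> nat \<Rightarrow> 'a set \<Rightarrow> 'p \<Rightarrow> real" where
  "p_period up q T pe n X h = (\<Sum>c\<in>{c. c < n \<and> X \<subseteq> T c \<and> pe c = h}. pX up q X c)"

definition p_db :: "('a \<Rightarrow> real) \<Rightarrow> ('a \<Rightarrow> nat \<Rightarrow> real) \<Rightarrow> (nat \<Rightarrow> 'a set)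
    \<Rightarrow> nat \<Rightarrow> 'a set \<Rightarrow> real" where
  "p_db up q T n X = (\<Sum>c\<in>{c. c < n \<and> X \<subseteq> T c}. pX up q X c)"

definition rtp :: "('a \<Rightarrow> real) \<Rightarrow> ('a \<Rightarrow> nat \<Rightarrow> real) \<Rightarrow> (nat \<Rightarrow> 'a set) \<Rightarrow> nat \<Rightarrow> real" where
  "rtp up q T c = (\<Sum>i\<in>{i\<in>T c. pi_T up q i c > 0}. pi_T up q i c)"

definition RTWU :: "('a \<Rightarrow> real) \<Rightarrow> ('a \<Rightarrow> nat \<Rightarrow> real) \<Rightarrow> (nat \<Rightarrow> 'a set)
    \<Rightarrow> nat \<Rightarrow> 'a set \<Rightarrow> real" where
  "RTWU up q T n X = (\<Sum>c\<in>{c. c < n \<and> X \<subseteq> T c}. rtp up q T c)"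

text \<open>The total order \<open>\<prec>\<close> is a relation r: (x,z) \<in> r means x \<prec> z.\<close>

definition pp :: "('a \<Rightarrow> real) \<Rightarrow> ('a \<Rightarrow> nat \<Rightarrow> real) \<Rightarrow> 'a set \<Rightarrow> nat \<Rightarrow> real" where
  "pp up q X c = (\<Sum>i\<in>{i\<in>X. pi_T up q i c \<ge> 0}. pi_T up q i c)"

definition np :: "('a \<Rightarrow> real) \<Rightarrow> ('a \<Rightarrow> nat \<Rightarrow> real) \<Rightarrow> 'a set \<Rightarrow> nat \<Rightarrow> real" where
  "np up q X c = (\<Sum>i\<in>{i\<in>X. pi_T up q i c < 0}. pi_T up q i c)"

definition rpp :: "('a \<Rightarrow> real) \<Rightarrow> ('a \<Rightarrow> nat \<Rightarrow> real) \<Rightarrow> (nat \<Rightarrow> 'a set)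
    \<Rightarrow> ('a \<times> 'a) set \<Rightarrow> 'a set \<Rightarrow> nat \<Rightarrow> real" where
  "rpp up q T r X c =
     (\<Sum>i\<in>{i\<in>T c - X. (\<forall>x\<in>X. (x, i) \<in> r) \<and> pi_T up q i c \<ge> 0}. pi_T up q i c)"

definition pp_period :: "('a \<Rightarrow> real) \<Rightarrow> ('a \<Rightarrow> nat \<Rightarrow> real) \<Rightarrow> (nat \<Rightarrow> 'a set)
    \<Rightarrow> (nat \<Rightarrow> 'p) \<Rightarrow> nat \<Rightarrow> 'a set \<Rightarrow> 'p \<Rightarrow> real" where
  "pp_period up q T pe n X h = (\<Sum>c\<in>{c. c < n \<and> X \<subseteq> T c \<and> pe c = h}. pp up q X c)"

definition rpp_period :: "('a \<Rightarrow> real) \<Rightarrow> ('a \<Rightarrow> nat \<Rightarrow> real) \<Rightarrow> (nat \<Rightarrow> 'a set)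
    \<Rightarrow> ('a \<times> 'a) set \<Rightarrow> (nat \<Rightarrow> 'p) \<Rightarrow> nat \<Rightarrow> 'a set \<Rightarrow> 'p \<Rightarrow> real" where
  "rpp_period up q T r pe n X h = (\<Sum>c\<in>{c. c < n \<and> X \<subseteq> T c \<and> pe c = h}. rpp up q T r X c)"

definition pp_db :: "('a \<Rightarrow> real) \<Rightarrow> ('a \<Rightarrow> nat \<Rightarrow> real) \<Rightarrow> (nat \<Rightarrow> 'a set)
    \<Rightarrow> nat \<Rightarrow> 'a set \<Rightarrow> real" where
  "pp_db up q T n X = (\<Sum>c\<in>{c. c < n \<and> X \<subseteq> T c}. pp up q X c)"

definition rpp_db :: "('a \<Rightarrow> real) \<Rightarrow> ('a \<Rightarrow> nat \<Rightarrow> real) \<Rightarrow> (nat \<Rightarrow> 'a set)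
    \<Rightarrow> ('a \<times> 'a) set \<Rightarrow> nat \<Rightarrow> 'a set \<Rightarrow> real" where
  "rpp_db up q T r n X = (\<Sum>c\<in>{c. c < n \<and> X \<subseteq> T c}. rpp up q T r X c)"

definition is_proc_order :: "'a set \<Rightarrow> ('a \<Rightarrow> real) \<Rightarrow> ('a \<Rightarrow> nat \<Rightarrow> real)
    \<Rightarrow> (nat \<Rightarrow> 'a set) \<Rightarrow> nat \<Rightarrow> ('a \<times> 'a) set \<Rightarrow> bool" where
  "is_proc_order I up q T n r \<longleftrightarrow>
     strict_linear_order_on I r \<and> r \<subseteq> I \<times> I \<and>
     (\<forall>i\<in>I. \<forall>j\<in>I. up i \<ge> 0 \<and> up j < 0 \<longrightarrow> (i, j) \<in> r) \<and>
     (\<forall>i\<in>I. \<forall>j\<in>I. (up i < 0 \<longleftrightarrow> up j < 0) \<and> RTWU up q T n {i} < RTWU up q T n {j}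
        \<longrightarrow> (i, j) \<in> r)"

definition se_child :: "'a set \<Rightarrow> ('a \<times> 'a) set \<Rightarrow> 'a set \<Rightarrow> 'a set \<Rightarrow> bool" where
  "se_child I r X Y \<longleftrightarrow> (\<exists>z\<in>I - X. (\<forall>x\<in>X. (x, z) \<in> r) \<and> Y = insert z X)"

end

theory Submission
  imports Defs
begin

text \<open>In a transaction containing the child \<open>Y = insert z X\<close>, the profit of \<open>X\<close> is at most
  its positive part \<open>pp\<close>, and the profit of \<open>z\<close> is at most its positive part, which is one of
  the summands of \<open>rpp X\<close> because \<open>z\<close> comes after every element of \<open>X\<close>. Summing over the
  transactions containing \<open>Y\<close> and enlarging the range to those containing \<open>X\<close> only adds
  nonnegative terms.\<close>

lemma pp_nonneg: "0 \<le> pp up q X c"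
  unfolding pp_def by (rule sum_nonneg) auto

lemma rpp_nonneg: "0 \<le> rpp up q T r X c"
  unfolding rpp_def by (rule sum_nonneg) auto

lemma np_nonpos: "np up q X c \<le> 0"
  unfolding np_def by (rule sum_nonpos) auto

lemma pX_eq_pp_plus_np:
  assumes "finite X"
  shows "pX up q X c = pp up q X c + np up q X c"
  unfolding pX_def pp_def np_def
  by (subst sum.union_disjoint[symmetric]) (use assms in \<open>auto intro: sum.cong\<close>)

lemma pX_le_pp:
  assumes "finite X"
  shows "pX up q X c \<le> pp up q X c"
  using pX_eq_pp_plus_np[OF assms, of up q c] np_nonpos[of up q X c] by linarith

lemma pi_T_le_rpp:
  assumes "finite (T c)" and "z \<in> T c - X" and "\<forall>x\<in>X. (x, z) \<in> r"
  shows "pi_T up q z c \<le> rpp up q T r X c"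
proof (cases "pi_T up q z c \<ge> 0")
  case True
  have "pi_T up q z c = (\<Sum>i\<in>{z}. pi_T up q i c)" by simp
  also have "\<dots> \<le> rpp up q T r X c"
    unfolding rpp_def by (rule sum_mono2) (use assms True in auto)
  finally show ?thesis .
next
  case False
  then show ?thesis using rpp_nonneg[of up q T r X c] by simp
qed

lemma pX_insert_le_pp_rpp:
  assumes "finite (T c)" and "insert z X \<subseteq> T c" and "z \<notin> X" and "\<forall>x\<in>X. (x, z) \<in> r"
  shows "pX up q (insert z X) c \<le> pp up q X c + rpp up q T r X c"
proof -
  have "finite X"
    using assms(2) by (intro finite_subset[OF _ assms(1)]) simp
  have "pX up q (insert z X) c = pi_T up q z c + pX up q X c"
    unfolding pX_def using \<open>finite X\<close> assms(3) by simp
  moreover have "pi_T up q z c \<le> rpp up q T r X c"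
    using assms by (intro pi_T_le_rpp) auto
  moreover have "pX up q X c \<le> pp up q X c"
    using \<open>finite X\<close> by (rule pX_le_pp)
  ultimately show ?thesis by linarith
qed

lemma sum_transactions_superset_le:
  fixes f g :: "nat \<Rightarrow> real"
  assumes "X \<subseteq> Y"
    and "\<And>c. c < n \<Longrightarrow> Y \<subseteq> T c \<Longrightarrow> f c \<le> g c" and "\<And>c. 0 \<le> g c"
  shows "(\<Sum>c\<in>{c. c < n \<and> Y \<subseteq> T c \<and> P c}. f c) \<le> (\<Sum>c\<in>{c. c < n \<and> X \<subseteq> T c \<and> P c}. g c)"
proof -
  have "(\<Sum>c\<in>{c. c < n \<and> Y \<subseteq> T c \<and> P c}. f c) \<le> (\<Sum>c\<in>{c. c < n \<and> Y \<subseteq> T c \<and> P c}. g c)"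
    by (rule sum_mono) (use assms(2) in auto)
  also have "\<dots> \<le> (\<Sum>c\<in>{c. c < n \<and> X \<subseteq> T c \<and> P c}. g c)"
    by (rule sum_mono2) (use assms(1,3) in auto)
  finally show ?thesis .
qed

theorem lemma2:
  fixes I :: "'a set" and up :: "'a \<Rightarrow> real" and q :: "'a \<Rightarrow> nat \<Rightarrow> real"
    and T :: "nat \<Rightarrow> 'a set" and pe :: "nat \<Rightarrow> 'p" and n :: nat
    and r :: "('a \<times> 'a) set" and X Y :: "'a set"
  assumes "finite I"
    and "\<And>c. c < n \<Longrightarrow> T c \<subseteq> I"
    and "\<And>c i. c < n \<Longrightarrow> i \<in> T c \<Longrightarrow> q i c > 0"
    and "is_proc_order I up q T n r"
    and "X \<subseteq> I"
    and "se_child I r X Y"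
  shows "(\<forall>h. p_period up q T pe n Y h \<le> pp_period up q T pe n X h + rpp_period up q T r pe n X h)
       \<and> p_db up q T n Y \<le> pp_db up q T n X + rpp_db up q T r n X"
proof -
  obtain z where z: "z \<in> I - X" "\<forall>x\<in>X. (x, z) \<in> r" and Y: "Y = insert z X"
    using assms(6) unfolding se_child_def by blast
  have per_transaction: "pX up q Y c \<le> pp up q X c + rpp up q T r X c"
    if "c < n" and "Y \<subseteq> T c" for c
    using pX_insert_le_pp_rpp[of T c z X r up q] finite_subset[OF assms(2) assms(1)] z that
    unfolding Y by blast
  have nonneg: "0 \<le> pp up q X c + rpp up q T r X c" for c
    using pp_nonneg rpp_nonneg by (rule add_nonneg_nonneg)
  have "X \<subseteq> Y" using Y by blast
  note bound = sum_transactions_superset_le[where f="\<lambda>c. pX up q Y c"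
      and g="\<lambda>c. pp up q X c + rpp up q T r X c", OF \<open>X \<subseteq> Y\<close> per_transaction nonneg,
      unfolded sum.distrib]
  have "p_period up q T pe n Y h \<le> pp_period up q T pe n X h + rpp_period up q T r pe n X h"
    for h
    using bound[where P="\<lambda>c. pe c = h"]
    unfolding p_period_def pp_period_def rpp_period_def .
  moreover have "p_db up q T n Y \<le> pp_db up q T n X + rpp_db up q T r n X"
    using bound[where P="\<lambda>_. True"] unfolding p_db_def pp_db_def rpp_db_def by simp
  ultimately show ?thesis by blast
qed

end
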